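(* Let $k^0_{rw},k^0_{rg},\mu_w,\mu_g,f_{mmob},\mathrm{epdry}>0$, let $n_w,n_g\ge 2$, $S_{wc},S_{gr}\ge0$ with $S_{wc}+S_{gr}<1$, $\mathrm{fmdry}\in\mathbb{R}$, and take $\mathrm{fmsurf}=C_{\max}$ and $\mathrm{epsurf}=1$. For $(S,C)\in[0,1]^2$ define $S_w=S_{wc}+S(1-S_{wc}-S_{gr})$, $$k_{rw}(S)=k^0_{rw}S^{n_w},\quad k_{rg}(S)=k^0_{rg}(1-S)^{n_g},\quad F_2(S)=\tfrac12+\tfrac1\pi\arctan\big(\mathrm{epdry}(S_w-\mathrm{fmdry})\big),$$ $$k^f_{rg}(S,C)=\frac{k_{rg}(S)}{1+f_{mmob}\,C\,F_2(S)},\qquad f(S,C)=\frac{k_{rw}(S)}{k_{rw}(S)+(\mu_w/\mu_g)\,k^f_{rg}(S,C)}.$$ Then $f\in\mathscr{C}^2([0,1]^2)$, $f(0,C)=0$, $f(1,C)=1$ and $\partial_Sf(0,C)=\partial_Sf(1,C)=0$ for every $C\in[0,1]$; moreover $\partial_Sf(S,C)>0$ and $\partial_Cf(S,C)>0$ for all $S\in(0,1)$, $C\in[0,1]$.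
   Context: This is the (normalized) water fractional flow function of the CMG-STARS local-equilibrium foam model: $S$ is normalized water saturation, $C=C_s^w/C_{\max}$ normalized surfactant concentration; with $\mathrm{fmsurf}=C_{\max}$, $\mathrm{epsurf}=1$ the surfactant factor $F_1$ equals $C$ on $[0,1]$, and the foam mobility reduction factor is $FM=(1+f_{mmob}F_1F_2)^{-1}$. *)

theory Defs
  imports "HOL-Analysis.Analysis"
begin

definition unit_square :: "(real \<times> real) set" where
  "unit_square = {0..1} \<times> {0..1}"

definition has_partials_on ::
  "(real \<times> real \<Rightarrow> real) \<Rightarrow> (real \<times> real \<Rightarrow> real) \<Rightarrow> (real \<times> real \<Rightarrow> real)
     \<Rightarrow> (real \<times> real) set \<Rightarrow> bool" where
  "has_partials_on g gS gC K \<longleftrightarrow>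
     (\<forall>p\<in>K. (g has_derivative (\<lambda>h. gS p * fst h + gC p * snd h)) (at p within K))"

definition C1_on :: "(real \<times> real \<Rightarrow> real) \<Rightarrow> (real \<times> real) set \<Rightarrow> bool" where
  "C1_on g K \<longleftrightarrow> (\<exists>gS gC. has_partials_on g gS gC K \<and> continuous_on K gS \<and> continuous_on K gC)"

definition C2_on :: "(real \<times> real \<Rightarrow> real) \<Rightarrow> (real \<times> real) set \<Rightarrow> bool" where
  "C2_on g K \<longleftrightarrow> (\<exists>gS gC. has_partials_on g gS gC K \<and> C1_on gS K \<and> C1_on gC K)"

text \<open>Fractional flow of the CMG-STARS foam model with fmsurf = Cmax, epsurf = 1,
  so that F1 = C on [0,1].\<close>
definition frac_flow ::
  "real \<Rightarrow> real \<Rightarrow> real \<Rightarrow> real \<Rightarrow> real \<Rightarrow> real \<Rightarrow> real \<Rightarrow> real \<Rightarrow> real \<Rightarrow> real \<Rightarrow> real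
     \<Rightarrow> real \<times> real \<Rightarrow> real" where
  "frac_flow krw0 krg0 muw mug fmmob epdry nw ng Swc Sgr fmdry p =
     (let S = fst p; C = snd p;
          Sw = Swc + S * (1 - Swc - Sgr);
          krw = krw0 * S powr nw;
          krg = krg0 * (1 - S) powr ng;
          F2 = 1/2 + (1/pi) * arctan (epdry * (Sw - fmdry));
          krgf = krg / (1 + fmmob * C * F2)
      in krw / (krw + (muw / mug) * krgf))"

end

theory Submission
  imports Defs
begin

(* Write f = u / (u + v) with u = krw and v = (muw/mug) krgf.  Away from the two
   powers, f is built from smooth functions by sums, products and quotients with
   nonvanishing denominator (u + v > 0 on the square), and S powr nw, (1 - S) powr ng
   are C^2 up to S = 0 resp. S = 1 because nw, ng >= 2; this gives f in C^2.
   Both derivatives have the form (u' v - u v') / (u + v)^2.  In S, u' >= 0 (> 0 inside)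
   and v' <= 0, since krg decreases while the foam factor 1 + fmmob C F2 increases with
   S (F2 is an increasing arctan); at S = 0 we have u = u' = 0 and at S = 1 we have
   v = v' = 0, again because the exponents exceed 1.  In C only v varies, and it is
   strictly decreasing. *)

lemma has_partials_onI:
  assumes "\<And>p. p \<in> K \<Longrightarrow> (g has_derivative (\<lambda>h. gS p * fst h + gC p * snd h)) (at p within K)"
  shows "has_partials_on g gS gC K"
  using assms unfolding has_partials_on_def by blast

lemma has_partials_onD:
  "has_partials_on g gS gC K \<Longrightarrow> p \<in> K
    \<Longrightarrow> (g has_derivative (\<lambda>h. gS p * fst h + gC p * snd h)) (at p within K)"
  unfolding has_partials_on_def by blast

lemma has_partials_on_imp_continuous_on: "has_partials_on g gS gC K \<Longrightarrow> continuous_on K g"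
  unfolding continuous_on_eq_continuous_within
  by (auto dest: has_partials_onD has_derivative_continuous)

lemma has_partials_on_const: "has_partials_on (\<lambda>p. c) (\<lambda>p. 0) (\<lambda>p. 0) K"
  by (rule has_partials_onI) (auto intro!: derivative_eq_intros)

lemma has_partials_on_fst: "has_partials_on fst (\<lambda>p. 1) (\<lambda>p. 0) K"
  by (rule has_partials_onI) (auto intro!: derivative_eq_intros)

lemma has_partials_on_snd: "has_partials_on snd (\<lambda>p. 0) (\<lambda>p. 1) K"
  by (rule has_partials_onI) (auto intro!: derivative_eq_intros)

lemma has_partials_on_add:
  assumes "has_partials_on g gS gC K" "has_partials_on h hS hC K"
  shows "has_partials_on (\<lambda>p. g p + h p) (\<lambda>p. gS p + hS p) (\<lambda>p. gC p + hC p) K"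
  by (rule has_partials_onI, rule has_derivative_eq_rhs[OF has_derivative_add[OF
      has_partials_onD[OF assms(1)] has_partials_onD[OF assms(2)]]]) (auto simp: algebra_simps)

lemma has_partials_on_mult:
  assumes "has_partials_on g gS gC K" "has_partials_on h hS hC K"
  shows "has_partials_on (\<lambda>p. g p * h p)
           (\<lambda>p. gS p * h p + g p * hS p) (\<lambda>p. gC p * h p + g p * hC p) K"
  by (rule has_partials_onI, rule has_derivative_eq_rhs[OF has_derivative_mult[OF
      has_partials_onD[OF assms(1)] has_partials_onD[OF assms(2)]]]) (auto simp: algebra_simps)

lemma has_partials_on_compose:
  assumes g: "has_partials_on g gS gC K" and gT: "g ` K \<subseteq> T"
    and \<phi>: "\<And>y. y \<in> T \<Longrightarrow> (\<phi> has_real_derivative \<phi>' y) (at y within T)"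
  shows "has_partials_on (\<lambda>p. \<phi> (g p)) (\<lambda>p. \<phi>' (g p) * gS p) (\<lambda>p. \<phi>' (g p) * gC p) K"
proof (rule has_partials_onI)
  fix p assume p: "p \<in> K"
  have "((\<lambda>p. \<phi> (g p)) has_derivative (\<lambda>h. \<phi>' (g p) * (gS p * fst h + gC p * snd h)))
      (at p within K)"
    using \<phi>[unfolded has_field_derivative_def]
    by (rule has_derivative_in_compose2[OF _ gT p has_partials_onD[OF g p]])
  then show "((\<lambda>p. \<phi> (g p)) has_derivative
      (\<lambda>h. \<phi>' (g p) * gS p * fst h + \<phi>' (g p) * gC p * snd h)) (at p within K)"
    by (rule has_derivative_eq_rhs) (simp add: algebra_simps)
qed

lemma C1_onE:
  assumes "C1_on g K"
  obtains gS gC where "has_partials_on g gS gC K" "continuous_on K gS" "continuous_on K gC"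
  using assms unfolding C1_on_def by blast

lemma C1_onI:
  "has_partials_on g gS gC K \<Longrightarrow> continuous_on K gS \<Longrightarrow> continuous_on K gC \<Longrightarrow> C1_on g K"
  unfolding C1_on_def by blast

lemma C1_on_imp_continuous_on: "C1_on g K \<Longrightarrow> continuous_on K g"
  unfolding C1_on_def by (blast intro: has_partials_on_imp_continuous_on)

lemma C1_on_const: "C1_on (\<lambda>p. c) K"
  using has_partials_on_const continuous_on_const continuous_on_const by (rule C1_onI)

lemma C1_on_add:
  assumes g: "C1_on g K" and h: "C1_on h K"
  shows "C1_on (\<lambda>p. g p + h p) K"
proof -
  obtain gS gC where g': "has_partials_on g gS gC K" "continuous_on K gS" "continuous_on K gC"
    using g by (rule C1_onE)
  obtain hS hC where h': "has_partials_on h hS hC K" "continuous_on K hS" "continuous_on K hC"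
    using h by (rule C1_onE)
  show ?thesis
    using has_partials_on_add[OF g'(1) h'(1)]
      continuous_on_add[OF g'(2) h'(2)] continuous_on_add[OF g'(3) h'(3)]
    by (rule C1_onI)
qed

lemma C1_on_mult:
  assumes g: "C1_on g K" and h: "C1_on h K"
  shows "C1_on (\<lambda>p. g p * h p) K"
proof -
  obtain gS gC where g': "has_partials_on g gS gC K" "continuous_on K gS" "continuous_on K gC"
    using g by (rule C1_onE)
  obtain hS hC where h': "has_partials_on h hS hC K" "continuous_on K hS" "continuous_on K hC"
    using h by (rule C1_onE)
  have "continuous_on K g" "continuous_on K h"
    using g h by (simp_all add: C1_on_imp_continuous_on)
  then show ?thesis
    using g' h' by (intro C1_onI[OF has_partials_on_mult[OF g'(1) h'(1)]] continuous_on_add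
        continuous_on_mult) simp_all
qed

lemma C1_on_compose:
  assumes g: "C1_on g K" and gT: "g ` K \<subseteq> T"
    and \<phi>: "\<And>y. y \<in> T \<Longrightarrow> (\<phi> has_real_derivative \<phi>' y) (at y within T)"
    and \<phi>'_cont: "continuous_on T \<phi>'"
  shows "C1_on (\<lambda>p. \<phi> (g p)) K"
proof -
  obtain gS gC where g': "has_partials_on g gS gC K" "continuous_on K gS" "continuous_on K gC"
    using g by (rule C1_onE)
  have "continuous_on K (\<lambda>p. \<phi>' (g p))"
    using \<phi>'_cont C1_on_imp_continuous_on[OF g] gT by (rule continuous_on_compose2)
  then show ?thesis
    using g' by (intro C1_onI[OF has_partials_on_compose[OF g'(1) gT \<phi>]] continuous_on_mult)
        simp_all
qed

lemma C2_onE: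
  assumes "C2_on g K"
  obtains gS gC where "has_partials_on g gS gC K" "C1_on gS K" "C1_on gC K"
  using assms unfolding C2_on_def by blast

lemma C2_onI: "has_partials_on g gS gC K \<Longrightarrow> C1_on gS K \<Longrightarrow> C1_on gC K \<Longrightarrow> C2_on g K"
  unfolding C2_on_def by blast

lemma C2_on_imp_C1_on:
  assumes "C2_on g K"
  shows "C1_on g K"
proof -
  obtain gS gC where "has_partials_on g gS gC K" "C1_on gS K" "C1_on gC K"
    using assms by (rule C2_onE)
  moreover from this(2,3) have "continuous_on K gS" "continuous_on K gC"
    by (simp_all add: C1_on_imp_continuous_on)
  ultimately show ?thesis
    unfolding C1_on_def by blast
qed

lemma C2_on_const: "C2_on (\<lambda>p. c) K"
  unfolding C2_on_def using has_partials_on_const C1_on_const by blast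

lemma C2_on_fst: "C2_on fst K"
  unfolding C2_on_def using has_partials_on_fst C1_on_const by blast

lemma C2_on_snd: "C2_on snd K"
  unfolding C2_on_def using has_partials_on_snd C1_on_const by blast

lemma C2_on_add: "C2_on g K \<Longrightarrow> C2_on h K \<Longrightarrow> C2_on (\<lambda>p. g p + h p) K"
  unfolding C2_on_def by (fast intro: has_partials_on_add C1_on_add)

lemma C2_on_mult:
  assumes g: "C2_on g K" and h: "C2_on h K"
  shows "C2_on (\<lambda>p. g p * h p) K"
proof -
  obtain gS gC where "has_partials_on g gS gC K" "C1_on gS K" "C1_on gC K"
    using g by (rule C2_onE)
  moreover obtain hS hC where "has_partials_on h hS hC K" "C1_on hS K" "C1_on hC K"
    using h by (rule C2_onE)
  moreover note g[THEN C2_on_imp_C1_on] h[THEN C2_on_imp_C1_on]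
  ultimately show ?thesis
    by (intro C2_onI[OF has_partials_on_mult] C1_on_add C1_on_mult)
qed

lemma C2_on_diff:
  assumes "C2_on g K" "C2_on h K"
  shows "C2_on (\<lambda>p. g p - h p) K"
  using C2_on_add[OF assms(1) C2_on_mult[OF C2_on_const assms(2)], of "-1"] by simp

lemma C2_on_compose:
  assumes g: "C2_on g K" and gT: "g ` K \<subseteq> T"
    and \<phi>: "\<And>y. y \<in> T \<Longrightarrow> (\<phi> has_real_derivative \<phi>' y) (at y within T)"
    and \<phi>': "\<And>y. y \<in> T \<Longrightarrow> (\<phi>' has_real_derivative \<phi>'' y) (at y within T)"
    and \<phi>''_cont: "continuous_on T \<phi>''"
  shows "C2_on (\<lambda>p. \<phi> (g p)) K"
proof -
  obtain gS gC where g': "has_partials_on g gS gC K" "C1_on gS K" "C1_on gC K"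
    using g by (rule C2_onE)
  have \<phi>'g: "C1_on (\<lambda>p. \<phi>' (g p)) K"
    using C2_on_imp_C1_on[OF g] gT \<phi>' \<phi>''_cont by (rule C1_on_compose)
  show ?thesis
    using has_partials_on_compose[OF g'(1) gT \<phi>] C1_on_mult[OF \<phi>'g g'(2)]
      C1_on_mult[OF \<phi>'g g'(3)]
    by (rule C2_onI)
qed

lemma C2_on_divide:
  assumes "C2_on g K" "C2_on h K" "\<And>p. p \<in> K \<Longrightarrow> h p \<noteq> 0"
  shows "C2_on (\<lambda>p. g p / h p) K"
proof -
  have "C2_on (\<lambda>p. inverse (h p)) K"
  proof (rule C2_on_compose[where g = h and \<phi> = inverse and T = "- {0}"
        and \<phi>' = "\<lambda>y. - inverse (y ^ 2)" and \<phi>'' = "\<lambda>y. 2 * inverse (y ^ 3)"])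
    fix y :: real assume "y \<in> - {0}"
    then show "(inverse has_real_derivative - inverse (y ^ 2)) (at y within - {0})"
      and "((\<lambda>y. - inverse (y ^ 2)) has_real_derivative 2 * inverse (y ^ 3)) (at y within - {0})"
      by (auto intro!: derivative_eq_intros simp: field_simps eval_nat_numeral)
  next
    show "continuous_on (- {0}) (\<lambda>y::real. 2 * inverse (y ^ 3))"
      by (intro continuous_intros) auto
  qed (use assms in auto)
  then show ?thesis
    unfolding divide_inverse by (rule C2_on_mult[OF assms(1)])
qed

lemma C2_on_arctan:
  assumes "C2_on g K"
  shows "C2_on (\<lambda>p. arctan (g p)) K"
proof (rule C2_on_compose[where g = g and \<phi> = arctan and T = UNIV
      and \<phi>' = "\<lambda>y. inverse (1 + y\<^sup>2)" and \<phi>'' = "\<lambda>y. - (2 * y / (1 + y\<^sup>2)\<^sup>2)"])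
  fix y :: real
  have "1 + y\<^sup>2 \<noteq> 0"
    by (simp add: add_nonneg_eq_0_iff)
  then show "(arctan has_real_derivative inverse (1 + y\<^sup>2)) (at y within UNIV)"
    and "((\<lambda>y. inverse (1 + y\<^sup>2)) has_real_derivative - (2 * y / (1 + y\<^sup>2)\<^sup>2)) (at y within UNIV)"
    by (auto intro!: derivative_eq_intros simp: power2_eq_square field_simps)
next
  show "continuous_on UNIV (\<lambda>y::real. - (2 * y / (1 + y\<^sup>2)\<^sup>2))"
    by (intro continuous_intros) (simp add: add_nonneg_eq_0_iff)
qed (use assms in auto)

(* Not simply a * x powr (a - 1): Isabelle has 0 powr 0 = 0, which would give the
   wrong derivative at x = 0 for a = 1. *)
definition powr_deriv :: "real \<Rightarrow> real \<Rightarrow> real" where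
  "powr_deriv a x = (if a = 1 then 1 else a * x powr (a - 1))"

lemma has_real_derivative_powr_nonneg:
  assumes "a \<ge> 1" "x \<ge> 0"
  shows "((\<lambda>x. x powr a) has_real_derivative powr_deriv a x) (at x within {0..})"
proof (cases "x = 0")
  case False
  then have "((\<lambda>x. x powr a) has_real_derivative a * x powr (a - 1)) (at x)"
    using assms by (intro has_real_derivative_powr) auto
  then show ?thesis
    using False assms by (auto simp: powr_deriv_def intro: has_field_derivative_at_within)
next
  case True
  have quotient: "\<forall>\<^sub>F y in at 0 within {0..}. (y powr a - 0 powr a) / (y - 0)
      = (if a = 1 then 1 else y powr (a - 1))"
    by (auto simp: eventually_at_filter powr_diff)
  have "((\<lambda>y. if a = 1 then 1 else y powr (a - 1)) \<longlongrightarrow> powr_deriv a 0) (at 0 within {0..})"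
  proof (cases "a = 1")
    case False
    with assms have "((\<lambda>y. y powr (a - 1)) \<longlongrightarrow> 0 powr (a - 1)) (at 0 within {0..})"
      by (intro tendsto_powr') (auto simp: eventually_at_filter intro!: tendsto_ident_at)
    with False show ?thesis by (simp add: powr_deriv_def)
  qed (simp add: powr_deriv_def)
  then show ?thesis
    unfolding True has_field_derivative_iff by (rule tendsto_cong[THEN iffD2, OF quotient])
qed

lemma continuous_on_powr_deriv:
  assumes "a \<ge> 1"
  shows "continuous_on {0..} (powr_deriv a)"
proof (cases "a = 1")
  case False
  with assms have "continuous_on {0..} (\<lambda>x. a * x powr (a - 1))"
    by (intro continuous_intros continuous_on_powr') auto
  with False show ?thesis by (simp add: powr_deriv_def)
qed (simp add: powr_deriv_def)

lemma C2_on_powr: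
  assumes "a \<ge> 2" "C2_on g K" "\<And>p. p \<in> K \<Longrightarrow> g p \<ge> 0"
  shows "C2_on (\<lambda>p. g p powr a) K"
proof (rule C2_on_compose[where g = g and \<phi> = "\<lambda>x. x powr a" and T = "{0..}"
      and \<phi>' = "\<lambda>x. a * x powr (a - 1)" and \<phi>'' = "\<lambda>x. a * powr_deriv (a - 1) x"])
  fix x :: real assume x: "x \<in> {0..}"
  show "((\<lambda>x. x powr a) has_real_derivative a * x powr (a - 1)) (at x within {0..})"
    using has_real_derivative_powr_nonneg[of a x] assms(1) x by (simp add: powr_deriv_def)
  show "((\<lambda>x. a * x powr (a - 1)) has_real_derivative a * powr_deriv (a - 1) x) (at x within {0..})"
    by (rule DERIV_cmult[OF has_real_derivative_powr_nonneg]) (use assms(1) x in auto)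
next
  show "continuous_on {0..} (\<lambda>x. a * powr_deriv (a - 1) x)"
    using assms(1) by (intro continuous_on_mult_left continuous_on_powr_deriv) simp
qed (use assms in auto)

lemma powr_deriv_nonneg: "a \<ge> 1 \<Longrightarrow> x \<ge> 0 \<Longrightarrow> powr_deriv a x \<ge> 0"
  by (simp add: powr_deriv_def)

lemma powr_deriv_pos: "a \<ge> 1 \<Longrightarrow> x > 0 \<Longrightarrow> powr_deriv a x > 0"
  by (simp add: powr_deriv_def)

lemma powr_deriv_zero: "a \<noteq> 1 \<Longrightarrow> powr_deriv a 0 = 0"
  by (simp add: powr_deriv_def)

lemma has_real_derivative_ratio_sum:
  fixes u v :: "real \<Rightarrow> real"
  assumes "(u has_real_derivative u') (at x within X)" "(v has_real_derivative v') (at x within X)"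
    and "u x + v x \<noteq> 0"
  shows "((\<lambda>x. u x / (u x + v x)) has_real_derivative
           (u' * v x - u x * v') / (u x + v x)\<^sup>2) (at x within X)"
  using assms by (auto intro!: derivative_eq_intros simp: power2_eq_square algebra_simps)

locale foam_model =
  fixes krw0 krg0 muw mug fmmob epdry nw ng Swc Sgr fmdry :: real
  assumes krw0_pos: "krw0 > 0" and krg0_pos: "krg0 > 0"
    and muw_pos: "muw > 0" and mug_pos: "mug > 0"
    and fmmob_pos: "fmmob > 0" and epdry_pos: "epdry > 0"
    and nw_ge_2: "nw \<ge> 2" and ng_ge_2: "ng \<ge> 2"
    and Swc_Sgr_less_1: "Swc + Sgr < 1"
begin

definition krw :: "real \<Rightarrow> real" where
  "krw S = krw0 * S powr nw"

definition krg :: "real \<Rightarrow> real" where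
  "krg S = krg0 * (1 - S) powr ng"

definition F2 :: "real \<Rightarrow> real" where
  "F2 S = 1/2 + (1/pi) * arctan (epdry * (Swc + S * (1 - Swc - Sgr) - fmdry))"

definition krgf :: "real \<Rightarrow> real \<Rightarrow> real" where
  "krgf S C = krg S / (1 + fmmob * C * F2 S)"

abbreviation fw :: "real \<times> real \<Rightarrow> real" where
  "fw \<equiv> frac_flow krw0 krg0 muw mug fmmob epdry nw ng Swc Sgr fmdry"

lemma fw_eq:
  "fw = (\<lambda>p. krw (fst p) / (krw (fst p) + muw / mug * krgf (fst p) (snd p)))"
  by (simp add: fun_eq_iff frac_flow_def krw_def krg_def F2_def krgf_def Let_def)

lemma mobility_ratio_pos: "muw / mug > 0"
  using muw_pos mug_pos by simp

lemma F2_pos: "F2 S > 0"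
proof -
  have "- (pi / 2) < arctan (epdry * (Swc + S * (1 - Swc - Sgr) - fmdry))"
    by (rule arctan_lbound)
  then show ?thesis
    by (simp add: F2_def field_simps)
qed

lemma F2_deriv:
  obtains d where "(F2 has_real_derivative d) (at S)" "d \<ge> 0"
proof
  let ?y = "epdry * (Swc + S * (1 - Swc - Sgr) - fmdry)"
  show "(F2 has_real_derivative 1/pi * (inverse (1 + ?y\<^sup>2) * (epdry * (1 - Swc - Sgr)))) (at S)"
    unfolding F2_def by (auto intro!: derivative_eq_intros)
  show "1/pi * (inverse (1 + ?y\<^sup>2) * (epdry * (1 - Swc - Sgr))) \<ge> 0"
    using epdry_pos Swc_Sgr_less_1 by (simp add: add_pos_nonneg)
qed

lemma foam_factor_pos: "C \<ge> 0 \<Longrightarrow> 1 + fmmob * C * F2 S > 0"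
  using fmmob_pos F2_pos[of S] by (simp add: add_pos_nonneg)

lemma krw_0: "krw 0 = 0"
  by (simp add: krw_def)

lemma krg_1: "krg 1 = 0"
  by (simp add: krg_def)

lemma krw_nonneg: "krw S \<ge> 0"
  using krw0_pos by (simp add: krw_def)

lemma krw_pos: "S > 0 \<Longrightarrow> krw S > 0"
  using krw0_pos by (simp add: krw_def)

lemma krg_nonneg: "krg S \<ge> 0"
  using krg0_pos by (simp add: krg_def)

lemma krg_pos: "S < 1 \<Longrightarrow> krg S > 0"
  using krg0_pos by (simp add: krg_def)

lemma krgf_nonneg: "C \<ge> 0 \<Longrightarrow> krgf S C \<ge> 0"
  unfolding krgf_def by (intro divide_nonneg_pos krg_nonneg foam_factor_pos)

lemma krgf_1: "krgf 1 C = 0"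
  by (simp add: krgf_def krg_1)

lemma krgf_pos: "S < 1 \<Longrightarrow> C \<ge> 0 \<Longrightarrow> krgf S C > 0"
  unfolding krgf_def by (intro divide_pos_pos krg_pos foam_factor_pos)

lemma total_mobility_pos:
  assumes "S \<in> {0..1}" "C \<ge> 0"
  shows "krw S + muw / mug * krgf S C > 0"
proof (cases "S = 0")
  case True
  with assms have "muw / mug * krgf S C > 0"
    by (intro mult_pos_pos mobility_ratio_pos krgf_pos) auto
  then show ?thesis using krw_nonneg[of S] by linarith
next
  case False
  with assms have "krw S > 0" by (intro krw_pos) simp
  then show ?thesis
    using mult_nonneg_nonneg[OF less_imp_le[OF mobility_ratio_pos] krgf_nonneg[OF assms(2), of S]]
    by linarith
qed

lemma krw_deriv:
  "S \<in> {0..1} \<Longrightarrow> (krw has_real_derivative krw0 * powr_deriv nw S) (at S within {0..1})"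
  unfolding krw_def using nw_ge_2
  by (intro DERIV_cmult has_field_derivative_subset[OF has_real_derivative_powr_nonneg]) auto

lemma krg_deriv:
  assumes "S \<in> {0..1}"
  shows "(krg has_real_derivative - krg0 * powr_deriv ng (1 - S)) (at S within {0..1})"
proof -
  have "((\<lambda>x. x powr ng) has_real_derivative powr_deriv ng (1 - S))
      (at (1 - S) within (\<lambda>S. 1 - S) ` {0..1})"
    using assms ng_ge_2
    by (intro has_field_derivative_subset[OF has_real_derivative_powr_nonneg]) auto
  moreover have "((\<lambda>S. 1 - S) has_real_derivative -1) (at S within {0..1})"
    by (auto intro!: derivative_eq_intros)
  ultimately have "((\<lambda>S. (1 - S) powr ng) has_real_derivative powr_deriv ng (1 - S) * -1)
      (at S within {0..1})"
    by (rule DERIV_image_chain[unfolded comp_def])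
  then show ?thesis
    unfolding krg_def by (auto intro: DERIV_cmult[THEN DERIV_cong])
qed

lemma krgf_S_deriv:
  assumes S: "S \<in> {0..1}" and C: "C \<ge> 0"
  obtains d where "((\<lambda>s. krgf s C) has_real_derivative d) (at S within {0..1})"
    and "d \<le> 0" and "S = 1 \<Longrightarrow> d = 0"
proof -
  obtain dF where dF: "(F2 has_real_derivative dF) (at S)" "dF \<ge> 0"
    by (rule F2_deriv)
  let ?D = "1 + fmmob * C * F2 S" and ?dD = "fmmob * C * dF"
    and ?dkrg = "- krg0 * powr_deriv ng (1 - S)"
  have dD: "((\<lambda>s. 1 + fmmob * C * F2 s) has_real_derivative ?dD) (at S within {0..1})"
    by (rule DERIV_cong[OF DERIV_add[OF DERIV_const DERIV_cmult[OF
          has_field_derivative_at_within[OF dF(1)]]]]) simp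
  have "((\<lambda>s. krgf s C) has_real_derivative (?dkrg * ?D - krg S * ?dD) / (?D * ?D))
      (at S within {0..1})"
    unfolding krgf_def using foam_factor_pos[OF C]
    by (intro DERIV_divide[OF krg_deriv[OF S] dD]) (simp add: less_imp_neq[symmetric])
  then show thesis
  proof (rule that)
    have "?dkrg * ?D \<le> 0"
      using krg0_pos ng_ge_2 S foam_factor_pos[OF C, of S]
      by (intro mult_nonpos_nonneg) (simp_all add: powr_deriv_nonneg)
    moreover have "krg S * ?dD \<ge> 0"
      using krg_nonneg fmmob_pos C dF(2) by simp
    ultimately show "(?dkrg * ?D - krg S * ?dD) / (?D * ?D) \<le> 0"
      by (intro divide_nonpos_nonneg) simp_all
  next
    assume "S = 1"
    then show "(?dkrg * ?D - krg S * ?dD) / (?D * ?D) = 0"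
      using ng_ge_2 by (simp add: powr_deriv_zero krg_1)
  qed
qed

lemma fw_S_deriv:
  assumes S: "S \<in> {0..1}" and C: "C \<ge> 0"
  obtains d where "((\<lambda>s. fw (s, C)) has_real_derivative d) (at S within {0..1})"
    and "S \<in> {0, 1} \<Longrightarrow> d = 0" and "S \<in> {0<..<1} \<Longrightarrow> d > 0"
proof -
  obtain dv where dv: "((\<lambda>s. krgf s C) has_real_derivative dv) (at S within {0..1})"
      "dv \<le> 0" "S = 1 \<Longrightarrow> dv = 0"
    using krgf_S_deriv[OF S C] by blast
  let ?M = "muw / mug" and ?du = "krw0 * powr_deriv nw S"
  have "((\<lambda>s. fw (s, C)) has_real_derivative
      (?du * (?M * krgf S C) - krw S * (?M * dv)) / (krw S + ?M * krgf S C)\<^sup>2) (at S within {0..1})"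
    unfolding fw_eq fst_conv snd_conv using total_mobility_pos[OF S C]
    by (intro has_real_derivative_ratio_sum[OF krw_deriv[OF S] DERIV_cmult[OF dv(1)]]) simp
  then show thesis
  proof (rule that)
    assume "S \<in> {0, 1}"
    then show "(?du * (?M * krgf S C) - krw S * (?M * dv)) / (krw S + ?M * krgf S C)\<^sup>2 = 0"
      using nw_ge_2 dv(3) by (auto simp: powr_deriv_zero krw_0 krgf_1)
  next
    assume S': "S \<in> {0<..<1}"
    have "?du * (?M * krgf S C) > 0"
      using S' C krw0_pos nw_ge_2
      by (intro mult_pos_pos powr_deriv_pos krgf_pos mobility_ratio_pos) simp_all
    moreover have "krw S * (?M * dv) \<le> 0"
      using mobility_ratio_pos dv(2)
      by (intro mult_nonneg_nonpos krw_nonneg mult_nonneg_nonpos) simp_all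
    ultimately show "(?du * (?M * krgf S C) - krw S * (?M * dv)) / (krw S + ?M * krgf S C)\<^sup>2 > 0"
      using total_mobility_pos[OF S C] by simp
  qed
qed

lemma fw_C_deriv_pos:
  assumes S: "S \<in> {0<..<1}" and C: "C \<ge> 0"
  shows "\<exists>d>0. ((\<lambda>c. fw (S, c)) has_real_derivative d) (at C)"
proof -
  let ?M = "muw / mug" and ?D = "1 + fmmob * C * F2 S"
  let ?dv = "- (krg S * (fmmob * F2 S)) / (?D * ?D)"
  have dv: "((\<lambda>c. krgf S c) has_real_derivative ?dv) (at C)"
    unfolding krgf_def using foam_factor_pos[OF C, of S]
    by (auto intro!: derivative_eq_intros)
  have deriv: "((\<lambda>c. fw (S, c)) has_real_derivative
      (0 * (?M * krgf S C) - krw S * (?M * ?dv)) / (krw S + ?M * krgf S C)\<^sup>2) (at C)"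
    unfolding fw_eq fst_conv snd_conv using total_mobility_pos[of S C] S C
    by (intro has_real_derivative_ratio_sum[OF DERIV_const DERIV_cmult[OF dv]]) simp
  have "?dv < 0"
    using S fmmob_pos F2_pos[of S] foam_factor_pos[OF C, of S] by (simp add: krg_pos)
  then have "krw S * (?M * ?dv) < 0"
    using S by (intro mult_pos_neg krw_pos mobility_ratio_pos) simp_all
  then have "(0 * (?M * krgf S C) - krw S * (?M * ?dv)) / (krw S + ?M * krgf S C)\<^sup>2 > 0"
    using S C total_mobility_pos[of S C] by (intro divide_pos_pos) simp_all
  with deriv show ?thesis by blast
qed

lemma fw_0: "fw (0, C) = 0"
  by (simp add: fw_eq krw_0)

lemma fw_1: "fw (1, C) = 1"
  using krw_pos[of 1] by (simp add: fw_eq krgf_1)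

lemma fw_C2: "C2_on fw unit_square"
proof -
  have sq: "fst p \<in> {0..1}" "snd p \<in> {0..1}" if "p \<in> unit_square" for p
    using that by (auto simp: unit_square_def)
  have krw: "C2_on (\<lambda>p. krw (fst p)) unit_square"
    unfolding krw_def
    by (rule C2_on_mult[OF C2_on_const C2_on_powr[OF nw_ge_2 C2_on_fst]]) (use sq in auto)
  have krg: "C2_on (\<lambda>p. krg (fst p)) unit_square"
    unfolding krg_def
    by (rule C2_on_mult[OF C2_on_const C2_on_powr[OF ng_ge_2 C2_on_diff[OF C2_on_const C2_on_fst]]])
      (use sq in auto)
  have "C2_on (\<lambda>p. F2 (fst p)) unit_square"
    unfolding F2_def
    by (intro C2_on_add C2_on_mult C2_on_arctan C2_on_diff C2_on_const C2_on_fst)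
  then have krgf: "C2_on (\<lambda>p. krgf (fst p) (snd p)) unit_square"
    unfolding krgf_def using foam_factor_pos sq
    by (intro C2_on_divide[OF krg] C2_on_add C2_on_mult C2_on_const C2_on_snd)
      (auto simp: less_imp_neq[symmetric])
  show ?thesis
    unfolding fw_eq using total_mobility_pos sq
    by (intro C2_on_divide[OF krw] C2_on_add[OF krw] C2_on_mult[OF C2_on_const krgf])
      (auto simp: less_imp_neq[symmetric])
qed

lemma fw_S_deriv_endpoints:
  assumes "S \<in> {0, 1}" "C \<ge> 0"
  shows "((\<lambda>s. fw (s, C)) has_real_derivative 0) (at S within {0..1})"
proof -
  have "S \<in> {0..1}" using assms(1) by auto
  then show ?thesis
    using fw_S_deriv[of S C] assms by metis
qed

lemma fw_S_deriv_pos: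
  assumes "S \<in> {0<..<1}" "C \<ge> 0"
  shows "\<exists>d>0. ((\<lambda>s. fw (s, C)) has_real_derivative d) (at S)"
proof -
  have "at S within {0..1} = at S"
    using assms(1) by (intro at_within_interior) simp
  moreover have "S \<in> {0..1}" using assms(1) by auto
  ultimately show ?thesis
    using fw_S_deriv[of S C] assms by metis
qed

end

theorem mainTheorem7:
  fixes krw0 krg0 muw mug fmmob epdry nw ng Swc Sgr fmdry :: real
  assumes "krw0 > 0" "krg0 > 0" "muw > 0" "mug > 0" "fmmob > 0" "epdry > 0"
    and "nw \<ge> 2" "ng \<ge> 2"
    and "Swc \<ge> 0" "Sgr \<ge> 0" "Swc + Sgr < 1"
  defines "f \<equiv> frac_flow krw0 krg0 muw mug fmmob epdry nw ng Swc Sgr fmdry"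
  shows "C2_on f unit_square
    \<and> (\<forall>C\<in>{0..1}. f (0, C) = 0 \<and> f (1, C) = 1)
    \<and> (\<forall>C\<in>{0..1}. ((\<lambda>S. f (S, C)) has_real_derivative 0) (at 0 within {0..1})
                 \<and> ((\<lambda>S. f (S, C)) has_real_derivative 0) (at 1 within {0..1}))
    \<and> (\<forall>S\<in>{0<..<1}. \<forall>C\<in>{0..1}.
          (\<exists>d>0. ((\<lambda>s. f (s, C)) has_real_derivative d) (at S))
        \<and> (\<exists>d>0. ((\<lambda>c. f (S, c)) has_real_derivative d) (at C within {0..1})))"
proof -
  interpret foam_model krw0 krg0 muw mug fmmob epdry nw ng Swc Sgr fmdry
    using assms by unfold_locales
  have C_increasing: "\<exists>d>0. ((\<lambda>c. fw (S, c)) has_real_derivative d) (at C within {0..1})"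
    if "S \<in> {0<..<1}" "C \<in> {0..1}" for S C
    using fw_C_deriv_pos[of S C] that by (auto intro: has_field_derivative_at_within)
  show ?thesis
    unfolding f_def
    using fw_C2 fw_0 fw_1 fw_S_deriv_endpoints fw_S_deriv_pos C_increasing by simp
qed

end
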